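(* Let $G$ be a finite non-abelian group, let $m\ge 2$ be an integer, let $R$ be a Cayley subset of $G$ such that $\Gamma:=\mathrm{Cay}(G,R)$ is a GRR, $|\Gamma[R]_I|\le 1$ and $G=\langle R\setminus\Gamma[R]_I\rangle$, and let $x\in G$ satisfy one of: (1) $m\ge 3$, $x\notin\mathbf{Z}(G)$ and $o(x)>2$; (2) $m=2$ and $x^2\notin\mathbf{Z}(G)$; (3) $m=2$, $g^2\in\mathbf{Z}(G)$ for all $g\in G$, $x\notin\mathbf{Z}(G)\cup R$ and $o(x)>2$. In cases (1) or (3), let $\Theta$ be the graph with vertex set $G\times\{0,\dots,m-1\}$ (writing $g_i$ for $(g,i)$) whose edges are: $\{g_i,(rg)_i\}$ for all $i$, $g\in G$, $r\in R$; $\{g_i,g_{i+1}\}$ for all $g\in G$, $i\in\{0,\dots,m-2\}$; and $\{g_0,(xg)_{m-1}\}$ for all $g\in G$. In case (2), let $\Theta$ be the graph with vertex set $G\times\{0,1\}$ whose edges are $\{g_0,(rg)_0\}$, $\{g_1,(rg)_1\}$ for $g\in G$, $r\in R$, and $\{g_0,(xg)_1\}$ for $g\in G$. Then $\Theta$ is an $m$-GRR for $G$.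
   Context: All groups and graphs are finite and simple. A Cayley subset of $G$ is $R\subseteq G$ with $R=R^{-1}$, $1\notin R$; $\mathrm{Cay}(G,R)$ has vertex set $G$ and edges $\{g,rg\}$, $r\in R$; it is a GRR if its automorphism group is (the right regular copy of) $G$. $\Gamma[R]_I$ is the set of isolated vertices of the subgraph of $\Gamma$ induced on $R$. $\mathbf{Z}(G)$ is the center, $o(g)$ the order of $g$. An $m$-GRR for $G$ is a regular graph having a semiregular automorphism group isomorphic to $G$ with $m$ vertex-orbits and whose full automorphism group is isomorphic to $G$ (here: the group of maps $y_i\mapsto (yg)_i$). *)

theory Defs
  imports "HOL-Algebra.Algebra"
begin

(* Automorphisms of (V,E): permutations of V preserving adjacency; extended by the
   identity outside V so that automorphisms are unique as HOL functions. *)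
definition graph_aut :: "'v set \<Rightarrow> ('v \<Rightarrow> 'v \<Rightarrow> bool) \<Rightarrow> ('v \<Rightarrow> 'v) \<Rightarrow> bool" where
  "graph_aut V E f \<longleftrightarrow> bij_betw f V V \<and>
     (\<forall>u\<in>V. \<forall>v\<in>V. E u v \<longleftrightarrow> E (f u) (f v)) \<and> (\<forall>v. v \<notin> V \<longrightarrow> f v = v)"

definition regular_graph :: "'v set \<Rightarrow> ('v \<Rightarrow> 'v \<Rightarrow> bool) \<Rightarrow> bool" where
  "regular_graph V E \<longleftrightarrow> (\<exists>k. \<forall>v\<in>V. card {u\<in>V. E v u} = k)"

definition group_center :: "('a, 'b) monoid_scheme \<Rightarrow> 'a set" where
  "group_center G = {z \<in> carrier G. \<forall>g\<in>carrier G. z \<otimes>\<^bsub>G\<^esub> g = g \<otimes>\<^bsub>G\<^esub> z}"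

definition cayley_subset :: "('a, 'b) monoid_scheme \<Rightarrow> 'a set \<Rightarrow> bool" where
  "cayley_subset G R \<longleftrightarrow> R \<subseteq> carrier G \<and> (\<forall>r\<in>R. inv\<^bsub>G\<^esub> r \<in> R) \<and> \<one>\<^bsub>G\<^esub> \<notin> R"

definition cay_adj :: "('a, 'b) monoid_scheme \<Rightarrow> 'a set \<Rightarrow> 'a \<Rightarrow> 'a \<Rightarrow> bool" where
  "cay_adj G R g h \<longleftrightarrow> g \<in> carrier G \<and> h \<in> carrier G \<and>
     (\<exists>r\<in>R. h = r \<otimes>\<^bsub>G\<^esub> g \<or> g = r \<otimes>\<^bsub>G\<^esub> h)"

definition right_mult :: "('a, 'b) monoid_scheme \<Rightarrow> 'a \<Rightarrow> 'a \<Rightarrow> 'a" where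
  "right_mult G g = (\<lambda>y. if y \<in> carrier G then y \<otimes>\<^bsub>G\<^esub> g else y)"

definition is_GRR :: "('a, 'b) monoid_scheme \<Rightarrow> 'a set \<Rightarrow> bool" where
  "is_GRR G R \<longleftrightarrow> {f. graph_aut (carrier G) (cay_adj G R) f} = right_mult G ` carrier G"

definition isolated_in_R :: "('a, 'b) monoid_scheme \<Rightarrow> 'a set \<Rightarrow> 'a set" where
  "isolated_in_R G R = {r \<in> R. \<forall>s\<in>R. \<not> cay_adj G R r s}"

definition layers :: "('a, 'b) monoid_scheme \<Rightarrow> nat \<Rightarrow> ('a \<times> nat) set" where
  "layers G m = carrier G \<times> {0..<m}"

definition layer_right_mult :: "('a, 'b) monoid_scheme \<Rightarrow> nat \<Rightarrow> 'a \<Rightarrow> 'a \<times> nat \<Rightarrow> 'a \<times> nat" where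
  "layer_right_mult G m g = (\<lambda>(y, i). if (y, i) \<in> layers G m then (y \<otimes>\<^bsub>G\<^esub> g, i) else (y, i))"

definition is_mGRR :: "('a, 'b) monoid_scheme \<Rightarrow> nat \<Rightarrow> ('a \<times> nat \<Rightarrow> 'a \<times> nat \<Rightarrow> bool) \<Rightarrow> bool" where
  "is_mGRR G m E \<longleftrightarrow> regular_graph (layers G m) E \<and>
     {f. graph_aut (layers G m) E f} = layer_right_mult G m ` carrier G"

definition theta1_gen :: "('a, 'b) monoid_scheme \<Rightarrow> 'a set \<Rightarrow> 'a \<Rightarrow> nat \<Rightarrow> 'a \<times> nat \<Rightarrow> 'a \<times> nat \<Rightarrow> bool" where
  "theta1_gen G R x m a b \<longleftrightarrow> (case a of (g, i) \<Rightarrow> case b of (h, j) \<Rightarrow>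
      (i = j \<and> (\<exists>r\<in>R. h = r \<otimes>\<^bsub>G\<^esub> g))
    \<or> (h = g \<and> i \<le> m - 2 \<and> j = i + 1)
    \<or> (i = 0 \<and> j = m - 1 \<and> h = x \<otimes>\<^bsub>G\<^esub> g))"

definition theta1 :: "('a, 'b) monoid_scheme \<Rightarrow> 'a set \<Rightarrow> 'a \<Rightarrow> nat \<Rightarrow> 'a \<times> nat \<Rightarrow> 'a \<times> nat \<Rightarrow> bool" where
  "theta1 G R x m a b \<longleftrightarrow> a \<in> layers G m \<and> b \<in> layers G m \<and>
     (theta1_gen G R x m a b \<or> theta1_gen G R x m b a)"

definition theta2_gen :: "('a, 'b) monoid_scheme \<Rightarrow> 'a set \<Rightarrow> 'a \<Rightarrow> 'a \<times> nat \<Rightarrow> 'a \<times> nat \<Rightarrow> bool" where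
  "theta2_gen G R x a b \<longleftrightarrow> (case a of (g, i) \<Rightarrow> case b of (h, j) \<Rightarrow>
      (i = j \<and> (\<exists>r\<in>R. h = r \<otimes>\<^bsub>G\<^esub> g))
    \<or> (i = 0 \<and> j = 1 \<and> h = x \<otimes>\<^bsub>G\<^esub> g))"

definition theta2 :: "('a, 'b) monoid_scheme \<Rightarrow> 'a set \<Rightarrow> 'a \<Rightarrow> 'a \<times> nat \<Rightarrow> 'a \<times> nat \<Rightarrow> bool" where
  "theta2 G R x a b \<longleftrightarrow> a \<in> layers G 2 \<and> b \<in> layers G 2 \<and>
     (theta2_gen G R x a b \<or> theta2_gen G R x b a)"

end

theory Submission
  imports Defs
begin

(* On each layer, \<Theta> is a copy of \<Gamma> = Cay(G, R); between layers i and j it has the edges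
   from (g, i) to (c g, j) for c in a fixed set V i j of "voltages" built from 1 and x.
   Right multiplication by G acts on such a graph, and it is regular once every layer sees the
   same number of voltages.

   Conversely, let \<phi> be an automorphism. For s \<in> R outside \<Gamma>[R]\<^sub>I the edge from (g, i) to
   (s g, i) lies in a triangle inside layer i, whereas the voltages are chosen so that no
   triangle uses an edge between layers. Since these s generate G, \<phi> maps every layer onto a
   layer, and on layer i it is an automorphism of the GRR \<Gamma>, that is g \<mapsto> g a\<^sub>i. Comparing
   the images of the edges between layers finally shows that the layer permutation is trivial
   and that all a\<^sub>i agree: otherwise some voltage (x, x\<inverse> or x\<inverse>x\<inverse>) would be central. *)

lemma mem_layers_iff [simp]: "(g, i) \<in> layers G m \<longleftrightarrow> g \<in> carrier G \<and> i < m"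
  by (simp add: layers_def)

lemma layer_right_mult_apply:
  "(g, i) \<in> layers G m \<Longrightarrow> layer_right_mult G m a (g, i) = (g \<otimes>\<^bsub>G\<^esub> a, i)"
  by (simp add: layer_right_mult_def)

lemma graph_aut_adj_iff:
  "graph_aut V E \<phi> \<Longrightarrow> u \<in> V \<Longrightarrow> v \<in> V \<Longrightarrow> E (\<phi> u) (\<phi> v) \<longleftrightarrow> E u v"
  by (simp add: graph_aut_def)

lemma graph_aut_in: "graph_aut V E \<phi> \<Longrightarrow> u \<in> V \<Longrightarrow> \<phi> u \<in> V"
  unfolding graph_aut_def by (meson bij_betw_apply)

lemma graph_aut_outside: "graph_aut V E \<phi> \<Longrightarrow> u \<notin> V \<Longrightarrow> \<phi> u = u"
  by (simp add: graph_aut_def)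

lemma graph_aut_layers_in:
  assumes "graph_aut (layers G m) E \<phi>" "g \<in> carrier G" "i < m"
  shows "fst (\<phi> (g, i)) \<in> carrier G" "snd (\<phi> (g, i)) < m"
  using graph_aut_in[OF assms(1), of "(g, i)"] assms(2,3) by (cases "\<phi> (g, i)"; simp)+

lemma permutes_lessThan_2:
  assumes "\<sigma> permutes {..<2::nat}"
  shows "(\<sigma> 0 = 0 \<and> \<sigma> 1 = 1) \<or> (\<sigma> 0 = 1 \<and> \<sigma> 1 = 0)"
proof -
  have "\<sigma> 0 < 2" "\<sigma> 1 < 2" using permutes_in_image[OF assms] by auto
  moreover have "\<sigma> 0 \<noteq> \<sigma> 1" using permutes_inj[OF assms] by (auto dest: injD)
  ultimately show ?thesis by linarith
qed

lemma permutes_path_eq_id: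
  assumes \<sigma>: "\<sigma> permutes {..<m}" and \<sigma>0: "\<sigma> 0 = 0"
    and step: "\<And>i. Suc i < m \<Longrightarrow> \<sigma> (Suc i) = Suc (\<sigma> i) \<or> \<sigma> i = Suc (\<sigma> (Suc i))"
  shows "\<sigma> = id"
proof
  fix i
  show "\<sigma> i = id i"
  proof (cases "i < m")
    case False
    then show ?thesis using permutes_not_in[OF \<sigma>] by simp
  next
    case True
    then show ?thesis
    proof (induction i rule: less_induct)
      case (less i)
      show ?case
      proof (cases i)
        case 0
        with \<sigma>0 show ?thesis by simp
      next
        case (Suc k)
        have "\<sigma> k = k" using less Suc by simp
        with step[of k] less.prems Suc consider "\<sigma> i = i" | "k = Suc (\<sigma> i)" by auto
        then show ?thesis
        proof cases
          case 2
          then have "\<sigma> (k - 1) = \<sigma> i" using less.IH[of "k - 1"] Suc less.prems by simp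
          then have "k - 1 = i" using permutes_inj[OF \<sigma>] by (auto dest: injD)
          with Suc show ?thesis by simp
        qed simp
      qed
    qed
  qed
qed

context group
begin

lemma cay_adj_iff:
  assumes "cayley_subset G R"
  shows "cay_adj G R g h \<longleftrightarrow> g \<in> carrier G \<and> h \<in> carrier G \<and> (\<exists>r\<in>R. h = r \<otimes> g)"
proof -
  have "g = r \<otimes> h \<longleftrightarrow> h = inv r \<otimes> g"
    if "r \<in> R" "g \<in> carrier G" "h \<in> carrier G" for r
    using that assms inv_solve_left[of h r g] by (auto simp: cayley_subset_def)
  with assms show ?thesis
    unfolding cay_adj_def cayley_subset_def by (metis inv_inv subsetD)
qed

lemma one_in_group_center: "\<one> \<in> group_center G"
  by (simp add: group_center_def)

lemma inv_in_group_center_iff: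
  assumes "z \<in> carrier G"
  shows "inv z \<in> group_center G \<longleftrightarrow> z \<in> group_center G"
proof -
  have "g \<otimes> inv z = inv z \<otimes> g \<longleftrightarrow> g \<otimes> z = z \<otimes> g" if "g \<in> carrier G" for g
    using that assms by (metis inv_closed inv_inv inv_solve_left inv_solve_right m_assoc m_closed)
  with assms show ?thesis by (auto simp: group_center_def)
qed

lemma left_factor_central:
  assumes a: "a \<in> carrier G" and b: "b \<in> carrier G" and c: "c \<in> carrier G"
    and eq: "\<And>g. g \<in> carrier G \<Longrightarrow> g \<otimes> b = c \<otimes> (g \<otimes> a)"
  shows "c \<in> group_center G" "b = c \<otimes> a"
proof -
  show b_eq: "b = c \<otimes> a" using eq[of \<one>] a b by simp
  have "g \<otimes> c = c \<otimes> g" if "g \<in> carrier G" for g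
  proof -
    have "(g \<otimes> c) \<otimes> a = (c \<otimes> g) \<otimes> a"
      using eq[OF that] b_eq that a c by (simp add: m_assoc)
    then show ?thesis using that a c by simp
  qed
  with c show "c \<in> group_center G" by (simp add: group_center_def)
qed

lemma sq_ne_one_if_ord_gt_2:
  assumes "x \<in> carrier G" "2 < ord x"
  shows "x \<otimes> x \<noteq> \<one>"
proof
  assume "x \<otimes> x = \<one>"
  then have "ord x dvd 2" using assms(1) pow_eq_id[of x 2] by (simp add: numeral_2_eq_2)
  with assms(2) show False by (simp add: nat_dvd_not_less)
qed

end

section \<open>Layered Cayley graphs\<close>

(* (g, i) is joined to (c g, j) for every voltage c \<in> V i j (i \<noteq> j); the graph is
   undirected when V j i consists of the inverses of V i j. *)
definition layered_cayley_adj ::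
    "('a, 'b) monoid_scheme \<Rightarrow> nat \<Rightarrow> 'a set \<Rightarrow> (nat \<Rightarrow> nat \<Rightarrow> 'a set) \<Rightarrow> 'a \<times> nat \<Rightarrow> 'a \<times> nat \<Rightarrow> bool"
  where "layered_cayley_adj G m R V u v \<longleftrightarrow> u \<in> layers G m \<and> v \<in> layers G m \<and>
    (if snd u = snd v then cay_adj G R (fst u) (fst v)
     else (\<exists>c\<in>V (snd u) (snd v). fst v = c \<otimes>\<^bsub>G\<^esub> fst u))"

(* The three conditions exclude the three kinds of triangles through an edge between
   layers i and j: third vertex in layer i, in layer j, or in a third layer l. *)
locale layered_cayley_graph = group G for G :: "('a, 'b) monoid_scheme" (structure) +
  fixes R :: "'a set" and m :: nat and V :: "nat \<Rightarrow> nat \<Rightarrow> 'a set"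
  assumes cayley: "cayley_subset G R"
    and voltages_closed: "V i j \<subseteq> carrier G"
    and no_triangle_back:
      "\<lbrakk>i < m; j < m; i \<noteq> j; c \<in> V i j; d \<in> V j i\<rbrakk> \<Longrightarrow> d \<otimes> c \<notin> R"
    and no_triangle_parallel:
      "\<lbrakk>i < m; j < m; i \<noteq> j; c \<in> V i j; d \<in> V i j\<rbrakk> \<Longrightarrow> d \<otimes> inv c \<notin> R"
    and no_triangle_across:
      "\<lbrakk>i < m; j < m; l < m; distinct [i, j, l]; c \<in> V i j; d \<in> V i l; e \<in> V j l\<rbrakk>
        \<Longrightarrow> d \<noteq> e \<otimes> c"
begin

abbreviation adj where "adj \<equiv> layered_cayley_adj G m R V"

lemma R_carrier: "R \<subseteq> carrier G"
  using cayley by (simp add: cayley_subset_def)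

lemma voltage_carrier: "c \<in> V i j \<Longrightarrow> c \<in> carrier G"
  using voltages_closed by blast

lemma adj_same_layer [simp]: "adj (g, i) (h, i) \<longleftrightarrow> i < m \<and> cay_adj G R g h"
  by (auto simp: layered_cayley_adj_def cay_adj_def)

lemma adj_between_layers:
  "i \<noteq> j \<Longrightarrow> adj (g, i) (h, j) \<longleftrightarrow>
     g \<in> carrier G \<and> h \<in> carrier G \<and> i < m \<and> j < m \<and> (\<exists>c\<in>V i j. h = c \<otimes> g)"
  by (auto simp: layered_cayley_adj_def)

lemma adj_in_layers: "adj u v \<Longrightarrow> u \<in> layers G m \<and> v \<in> layers G m"
  by (simp add: layered_cayley_adj_def)

lemma adj_right_mult:
  assumes "g \<in> carrier G" "h \<in> carrier G" "a \<in> carrier G"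
  shows "adj (g \<otimes> a, i) (h \<otimes> a, j) \<longleftrightarrow> adj (g, i) (h, j)"
proof -
  have shift: "h \<otimes> a = c \<otimes> (g \<otimes> a) \<longleftrightarrow> h = c \<otimes> g" if "c \<in> carrier G" for c
    using assms that by (metis m_assoc m_closed right_cancel)
  show ?thesis
  proof (cases "i = j")
    case True
    with assms R_carrier show ?thesis
      by (auto simp: cay_adj_iff[OF cayley] shift subset_iff)
  next
    case False
    with assms show ?thesis
      by (auto simp: adj_between_layers shift voltage_carrier)
  qed
qed

lemma adj_triangle_same_layer:
  assumes uv: "adj u v" and uw: "adj u w" and vw: "adj v w"
  shows "snd u = snd v"
proof (rule ccontr)
  obtain g i h j k l where uvw: "u = (g, i)" "v = (h, j)" "w = (k, l)"
    by (metis surj_pair)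
  assume "snd u \<noteq> snd v"
  then have ij: "i \<noteq> j" using uvw by simp
  with uv uvw obtain c where c: "c \<in> V i j" "h = c \<otimes> g"
    and carr: "g \<in> carrier G" "h \<in> carrier G" "i < m" "j < m"
    by (auto simp: adj_between_layers)
  have kl: "k \<in> carrier G" "l < m" using uw uvw adj_in_layers by auto
  have cc: "c \<in> carrier G" using c voltage_carrier by blast
  consider "l = i" | "l = j" | "l \<noteq> i" "l \<noteq> j" by blast
  then show False
  proof cases
    case 1
    with uw vw uvw ij obtain r d where "r \<in> R" "k = r \<otimes> g" "d \<in> V j i" "k = d \<otimes> h"
      by (auto simp: cay_adj_iff[OF cayley] adj_between_layers)
    moreover from this have "r = d \<otimes> c"
      using c carr cc R_carrier voltage_carrier[of d j i] by (auto simp: m_assoc[symmetric])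
    ultimately show False using no_triangle_back ij c carr by blast
  next
    case 2
    with uw vw uvw ij obtain r d where r: "r \<in> R" "k = r \<otimes> h" and d: "d \<in> V i j" "k = d \<otimes> g"
      by (auto simp: cay_adj_iff[OF cayley] adj_between_layers)
    then have "r \<otimes> c = d"
      using c carr cc R_carrier voltage_carrier[of d i j] by (auto simp: m_assoc[symmetric])
    then have "r = d \<otimes> inv c"
      using cc r R_carrier voltage_carrier[of d i j] d by (auto simp: inv_solve_right)
    with r d show False using no_triangle_parallel ij c carr by blast
  next
    case 3
    with uw vw uvw obtain d e where "d \<in> V i l" "k = d \<otimes> g" "e \<in> V j l" "k = e \<otimes> h"
      by (auto simp: adj_between_layers)
    moreover from this have "d = e \<otimes> c"
      using c carr cc voltage_carrier[of d i l] voltage_carrier[of e j l] by (auto simp: m_assoc[symmetric])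
    ultimately show False using no_triangle_across[of i j l c d e] 3 ij c carr kl by auto
  qed
qed

lemma adj_neighbourhood:
  assumes "g \<in> carrier G" "i < m"
  shows "{u \<in> layers G m. adj (g, i) u} =
    (\<lambda>r. (r \<otimes> g, i)) ` R \<union> (\<lambda>(j, c). (c \<otimes> g, j)) ` Sigma ({..<m} - {i}) (V i)"
proof -
  have "adj (g, i) (h, j) \<longleftrightarrow>
      (j = i \<and> (\<exists>r\<in>R. h = r \<otimes> g)) \<or> (j \<in> {..<m} - {i} \<and> (\<exists>c\<in>V i j. h = c \<otimes> g))" for h j
    using assms R_carrier voltage_carrier
    by (cases "j = i") (auto simp: cay_adj_iff[OF cayley] adj_between_layers)
  then show ?thesis using adj_in_layers by fastforce
qed

lemma regular_if_voltage_degree_const: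
  assumes fin: "finite (carrier G)"
    and deg: "\<And>i. i < m \<Longrightarrow> (\<Sum>j\<in>{..<m} - {i}. card (V i j)) = d"
  shows "regular_graph (layers G m) adj"
  unfolding regular_graph_def
proof (intro exI ballI)
  fix v assume "v \<in> layers G m"
  then obtain g i where v: "v = (g, i)" "g \<in> carrier G" "i < m" by (cases v) auto
  let ?S = "Sigma ({..<m} - {i}) (V i)"
  have fin_V: "finite (V i j)" for j using fin voltages_closed by (rule finite_subset[rotated])
  have "inj_on (\<lambda>r. (r \<otimes> g, i)) R" "inj_on (\<lambda>(j, c). (c \<otimes> g, j)) ?S"
    using v R_carrier voltage_carrier by (auto simp: inj_on_def subset_iff)
  then have "card ((\<lambda>r. (r \<otimes> g, i)) ` R) = card R" "card ((\<lambda>(j, c). (c \<otimes> g, j)) ` ?S) = d"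
    using deg v fin_V by (simp_all add: card_image)
  moreover have "finite R" using fin R_carrier by (rule finite_subset[rotated])
  moreover have "finite ?S" using fin_V by auto
  moreover have "(\<lambda>r. (r \<otimes> g, i)) ` R \<inter> (\<lambda>(j, c). (c \<otimes> g, j)) ` ?S = {}" by auto
  ultimately show "card {u \<in> layers G m. adj v u} = card R + d"
    using v by (simp add: adj_neighbourhood card_Un_disjoint)
qed

end

section \<open>Automorphisms of layered Cayley graphs\<close>

context layered_cayley_graph
begin

lemma layer_right_mult_aut:
  assumes a: "a \<in> carrier G"
  shows "graph_aut (layers G m) adj (layer_right_mult G m a)"
  unfolding graph_aut_def
proof (intro conjI ballI allI impI)
  show "bij_betw (layer_right_mult G m a) (layers G m) (layers G m)"
    by (rule bij_betw_byWitness[where f' = "layer_right_mult G m (inv a)"])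
      (use a in \<open>auto simp: layer_right_mult_apply m_assoc\<close>)
  show "adj u v \<longleftrightarrow> adj (layer_right_mult G m a u) (layer_right_mult G m a v)"
    if "u \<in> layers G m" "v \<in> layers G m" for u v
    using that a adj_right_mult by (cases u, cases v) (auto simp: layer_right_mult_apply)
  show "layer_right_mult G m a v = v" if "v \<notin> layers G m" for v
    using that by (cases v) (auto simp: layer_right_mult_def)
qed

(* A non-isolated s \<in> R puts the edge from (g, i) to (s g, i) into a triangle, which by
   adj_triangle_same_layer no automorphism can tear apart. *)
lemma aut_layer_mult_generator:
  assumes \<phi>: "graph_aut (layers G m) adj \<phi>" and s: "s \<in> R - isolated_in_R G R"
    and g: "g \<in> carrier G" and i: "i < m"
  shows "snd (\<phi> (s \<otimes> g, i)) = snd (\<phi> (g, i))"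
proof -
  from s obtain t where t: "t \<in> R" "cay_adj G R s t"
    unfolding isolated_in_R_def by blast
  then obtain r where r: "r \<in> R" "t = r \<otimes> s" and sc: "s \<in> carrier G"
    by (auto simp: cay_adj_iff[OF cayley])
  have tc: "t \<in> carrier G" "r \<in> carrier G" using t r R_carrier by auto
  have "adj (g, i) (s \<otimes> g, i)" "adj (g, i) (t \<otimes> g, i)"
    using g i s t(1) sc tc by (auto simp: cay_adj_iff[OF cayley])
  moreover have "adj (s \<otimes> g, i) (t \<otimes> g, i)"
    using g i r sc tc by (auto simp: cay_adj_iff[OF cayley] m_assoc intro!: bexI[of _ r])
  ultimately have "adj (\<phi> (g, i)) (\<phi> (s \<otimes> g, i))" "adj (\<phi> (g, i)) (\<phi> (t \<otimes> g, i))"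
      "adj (\<phi> (s \<otimes> g, i)) (\<phi> (t \<otimes> g, i))"
    using graph_aut_adj_iff[OF \<phi>] adj_in_layers by blast+
  then show ?thesis by (metis adj_triangle_same_layer)
qed

lemma aut_layer_mult_generated:
  assumes \<phi>: "graph_aut (layers G m) adj \<phi>" and h: "h \<in> generate G (R - isolated_in_R G R)"
  shows "g \<in> carrier G \<Longrightarrow> i < m \<Longrightarrow> snd (\<phi> (h \<otimes> g, i)) = snd (\<phi> (g, i))"
  using h
proof (induction arbitrary: g)
  case one
  then show ?case by simp
next
  case (incl h)
  then show ?case using aut_layer_mult_generator[OF \<phi>] by blast
next
  case (inv h)
  then have "h \<in> carrier G" using R_carrier by auto
  with inv aut_layer_mult_generator[OF \<phi> inv.hyps, of "inv h \<otimes> g" i] show ?case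
    by (simp add: m_assoc[symmetric])
next
  case (eng h1 h2)
  have "h1 \<in> carrier G" "h2 \<in> carrier G"
    using eng.hyps R_carrier generate_in_carrier[of "R - isolated_in_R G R"] by auto
  with eng show ?case by (simp add: m_assoc)
qed

lemma aut_layer_const:
  assumes \<phi>: "graph_aut (layers G m) adj \<phi>" and gen: "generate G (R - isolated_in_R G R) = carrier G"
    and g: "g \<in> carrier G" and i: "i < m"
  shows "snd (\<phi> (g, i)) = snd (\<phi> (\<one>, i))"
  using aut_layer_mult_generated[OF \<phi>, of g \<one> i] gen g i by simp

lemma aut_layer_perm:
  assumes \<phi>: "graph_aut (layers G m) adj \<phi>" and gen: "generate G (R - isolated_in_R G R) = carrier G"
  shows "(\<lambda>i. snd (\<phi> (\<one>, i))) permutes {..<m}"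
proof (rule bij_imp_permutes)
  let ?\<sigma> = "\<lambda>i. snd (\<phi> (\<one>, i))"
  have "?\<sigma> ` {..<m} = {..<m}"
  proof
    show "?\<sigma> ` {..<m} \<subseteq> {..<m}"
      using graph_aut_layers_in(2)[OF \<phi> one_closed] by auto
    show "{..<m} \<subseteq> ?\<sigma> ` {..<m}"
    proof
      fix j assume "j \<in> {..<m}"
      then have "(\<one>, j) \<in> \<phi> ` layers G m"
        using \<phi> by (auto simp: graph_aut_def bij_betw_def)
      then obtain g k where gk: "g \<in> carrier G" "k < m" "\<phi> (g, k) = (\<one>, j)" by auto
      then have "?\<sigma> k = j" using aut_layer_const[OF \<phi> gen, of g k] by simp
      with gk show "j \<in> ?\<sigma> ` {..<m}" by blast
    qed
  qed
  then show "bij_betw ?\<sigma> {..<m} {..<m}"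
    by (simp add: bij_betw_def eq_card_imp_inj_on)
  show "?\<sigma> i = i" if "i \<notin> {..<m}" for i
    using that graph_aut_outside[OF \<phi>, of "(\<one>, i)"] by simp
qed

lemma aut_layer_eq_iff:
  assumes \<phi>: "graph_aut (layers G m) adj \<phi>" and gen: "generate G (R - isolated_in_R G R) = carrier G"
    and "g \<in> carrier G" "h \<in> carrier G" "k < m" "i < m"
  shows "snd (\<phi> (g, k)) = snd (\<phi> (h, i)) \<longleftrightarrow> k = i"
proof -
  define \<sigma> where "\<sigma> = (\<lambda>i. snd (\<phi> (\<one>, i)))"
  have "inj \<sigma>" using permutes_inj[OF aut_layer_perm[OF \<phi> gen]] by (simp add: \<sigma>_def)
  moreover have "snd (\<phi> (g, k)) = \<sigma> k" "snd (\<phi> (h, i)) = \<sigma> i"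
    using aut_layer_const[OF \<phi> gen assms(3,5)] aut_layer_const[OF \<phi> gen assms(4,6)]
    by (simp_all add: \<sigma>_def)
  ultimately show ?thesis by (simp add: inj_eq)
qed

lemma aut_restrict_layer_bij:
  assumes \<phi>: "graph_aut (layers G m) adj \<phi>" and gen: "generate G (R - isolated_in_R G R) = carrier G"
    and i: "i < m"
  shows "bij_betw (\<lambda>g. fst (\<phi> (g, i))) (carrier G) (carrier G)"
  unfolding bij_betw_def
proof
  show "inj_on (\<lambda>g. fst (\<phi> (g, i))) (carrier G)"
  proof (rule inj_onI)
    fix g h assume g: "g \<in> carrier G" and h: "h \<in> carrier G" and "fst (\<phi> (g, i)) = fst (\<phi> (h, i))"
    then have "\<phi> (g, i) = \<phi> (h, i)" using aut_layer_eq_iff[OF \<phi> gen g h i i] by (simp add: prod_eq_iff)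
    then show "g = h" using \<phi> g h i by (auto simp: graph_aut_def bij_betw_def dest: inj_onD)
  qed
  show "(\<lambda>g. fst (\<phi> (g, i))) ` carrier G = carrier G"
  proof
    show "(\<lambda>g. fst (\<phi> (g, i))) ` carrier G \<subseteq> carrier G"
      using graph_aut_layers_in(1)[OF \<phi> _ i] by auto
    show "carrier G \<subseteq> (\<lambda>g. fst (\<phi> (g, i))) ` carrier G"
    proof
      fix h assume "h \<in> carrier G"
      then have "(h, snd (\<phi> (\<one>, i))) \<in> \<phi> ` layers G m"
        using \<phi> graph_aut_layers_in(2)[OF \<phi> one_closed i] by (auto simp: graph_aut_def bij_betw_def)
      then obtain g k where gk: "g \<in> carrier G" "k < m" "\<phi> (g, k) = (h, snd (\<phi> (\<one>, i)))" by auto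
      then have "k = i" using aut_layer_eq_iff[OF \<phi> gen gk(1) one_closed gk(2) i] by simp
      with gk show "h \<in> (\<lambda>g. fst (\<phi> (g, i))) ` carrier G" by (intro image_eqI[of _ _ g]) auto
    qed
  qed
qed

lemma aut_restrict_layer_cay_aut:
  assumes \<phi>: "graph_aut (layers G m) adj \<phi>" and gen: "generate G (R - isolated_in_R G R) = carrier G"
    and i: "i < m"
  shows "graph_aut (carrier G) (cay_adj G R) (\<lambda>g. if g \<in> carrier G then fst (\<phi> (g, i)) else g)"
  unfolding graph_aut_def
proof (intro conjI ballI allI impI)
  show "bij_betw (\<lambda>g. if g \<in> carrier G then fst (\<phi> (g, i)) else g) (carrier G) (carrier G)"
    using aut_restrict_layer_bij[OF \<phi> gen i] by (simp cong: bij_betw_cong)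
next
  fix g h assume g: "g \<in> carrier G" and h: "h \<in> carrier G"
  obtain g' p h' q where gh': "\<phi> (g, i) = (g', p)" "\<phi> (h, i) = (h', q)" by (metis surj_pair)
  then have "p = q" "q < m"
    using aut_layer_eq_iff[OF \<phi> gen g h i i] graph_aut_layers_in(2)[OF \<phi> h i] by auto
  then show "cay_adj G R g h \<longleftrightarrow>
      cay_adj G R (if g \<in> carrier G then fst (\<phi> (g, i)) else g) (if h \<in> carrier G then fst (\<phi> (h, i)) else h)"
    using graph_aut_adj_iff[OF \<phi>, of "(g, i)" "(h, i)"] g h i gh' by simp
qed simp

lemma aut_is_layer_twist:
  assumes \<phi>: "graph_aut (layers G m) adj \<phi>" and gen: "generate G (R - isolated_in_R G R) = carrier G"
    and grr: "is_GRR G R"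
  obtains \<sigma> a where "\<sigma> permutes {..<m}" "\<And>i. i < m \<Longrightarrow> a i \<in> carrier G"
    "\<And>g i. g \<in> carrier G \<Longrightarrow> i < m \<Longrightarrow> \<phi> (g, i) = (g \<otimes> a i, \<sigma> i)"
proof -
  define \<sigma> where "\<sigma> = (\<lambda>i. snd (\<phi> (\<one>, i)))"
  have "\<forall>i\<in>{..<m}. \<exists>a. a \<in> carrier G \<and> (\<forall>g\<in>carrier G. \<phi> (g, i) = (g \<otimes> a, \<sigma> i))"
  proof
    fix i assume "i \<in> {..<m}"
    then have i: "i < m" by simp
    let ?F = "\<lambda>g. if g \<in> carrier G then fst (\<phi> (g, i)) else g"
    have "?F \<in> right_mult G ` carrier G"
      using aut_restrict_layer_cay_aut[OF \<phi> gen i] grr unfolding is_GRR_def by blast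
    then obtain a where a: "a \<in> carrier G" "?F = right_mult G a" by blast
    have "\<phi> (g, i) = (g \<otimes> a, \<sigma> i)" if "g \<in> carrier G" for g
    proof (rule prod_eqI)
      show "fst (\<phi> (g, i)) = fst (g \<otimes> a, \<sigma> i)"
        using fun_cong[OF a(2), of g] that by (simp add: right_mult_def)
      show "snd (\<phi> (g, i)) = snd (g \<otimes> a, \<sigma> i)"
        using aut_layer_const[OF \<phi> gen that i] by (simp add: \<sigma>_def)
    qed
    with a show "\<exists>a. a \<in> carrier G \<and> (\<forall>g\<in>carrier G. \<phi> (g, i) = (g \<otimes> a, \<sigma> i))" by blast
  qed
  from bchoice[OF this] obtain a
    where "\<forall>i\<in>{..<m}. a i \<in> carrier G \<and> (\<forall>g\<in>carrier G. \<phi> (g, i) = (g \<otimes> a i, \<sigma> i))"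
    by blast
  moreover have "\<sigma> permutes {..<m}" using aut_layer_perm[OF \<phi> gen] by (simp add: \<sigma>_def)
  ultimately show ?thesis using that[of \<sigma> a] by simp
qed

end

(* The twist (g, i) \<mapsto> (g a\<^sub>i, \<sigma> i) maps each edge from (g, i) to (c g, j) onto an edge. *)
definition respects_voltages ::
    "('a, 'b) monoid_scheme \<Rightarrow> nat \<Rightarrow> (nat \<Rightarrow> nat \<Rightarrow> 'a set) \<Rightarrow> (nat \<Rightarrow> nat) \<Rightarrow> (nat \<Rightarrow> 'a) \<Rightarrow> bool"
  where "respects_voltages G m V \<sigma> a \<longleftrightarrow> (\<forall>i<m. \<forall>j<m. i \<noteq> j \<longrightarrow> (\<forall>c\<in>V i j. \<forall>g\<in>carrier G.
    \<exists>d\<in>V (\<sigma> i) (\<sigma> j). c \<otimes>\<^bsub>G\<^esub> g \<otimes>\<^bsub>G\<^esub> a j = d \<otimes>\<^bsub>G\<^esub> (g \<otimes>\<^bsub>G\<^esub> a i)))"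

lemma respects_voltagesD:
  "respects_voltages G m V \<sigma> a \<Longrightarrow> i < m \<Longrightarrow> j < m \<Longrightarrow> i \<noteq> j \<Longrightarrow> c \<in> V i j \<Longrightarrow> g \<in> carrier G
    \<Longrightarrow> \<exists>d\<in>V (\<sigma> i) (\<sigma> j). c \<otimes>\<^bsub>G\<^esub> g \<otimes>\<^bsub>G\<^esub> a j = d \<otimes>\<^bsub>G\<^esub> (g \<otimes>\<^bsub>G\<^esub> a i)"
  by (simp add: respects_voltages_def)

context layered_cayley_graph
begin

lemma aut_twist_respects_voltages:
  assumes \<phi>: "graph_aut (layers G m) adj \<phi>" and \<sigma>: "\<sigma> permutes {..<m}"
    and a: "\<And>i. i < m \<Longrightarrow> a i \<in> carrier G"
    and twist: "\<And>g i. g \<in> carrier G \<Longrightarrow> i < m \<Longrightarrow> \<phi> (g, i) = (g \<otimes> a i, \<sigma> i)"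
  shows "respects_voltages G m V \<sigma> a"
  unfolding respects_voltages_def
proof (intro allI impI ballI)
  fix i j c g assume i: "i < m" and j: "j < m" and ij: "i \<noteq> j" and c: "c \<in> V i j"
    and g: "g \<in> carrier G"
  have cg: "c \<otimes> g \<in> carrier G" using c g voltage_carrier by blast
  have "adj (g, i) (c \<otimes> g, j)" using i j ij c g cg by (auto simp: adj_between_layers)
  then have "adj (g \<otimes> a i, \<sigma> i) (c \<otimes> g \<otimes> a j, \<sigma> j)"
    using graph_aut_adj_iff[OF \<phi>, of "(g, i)" "(c \<otimes> g, j)"] twist i j g cg by simp
  moreover have "\<sigma> i \<noteq> \<sigma> j" using permutes_inj[OF \<sigma>] ij by (simp add: inj_eq)
  ultimately show "\<exists>d\<in>V (\<sigma> i) (\<sigma> j). c \<otimes> g \<otimes> a j = d \<otimes> (g \<otimes> a i)"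
    by (simp add: adj_between_layers)
qed

theorem aut_eq_layer_right_mult:
  assumes gen: "generate G (R - isolated_in_R G R) = carrier G" and grr: "is_GRR G R"
    and m: "0 < m"
    and rigid: "\<And>\<sigma> a. \<sigma> permutes {..<m} \<Longrightarrow> (\<And>i. i < m \<Longrightarrow> a i \<in> carrier G) \<Longrightarrow>
      respects_voltages G m V \<sigma> a \<Longrightarrow> \<forall>i<m. \<sigma> i = i \<and> a i = a 0"
  shows "{\<phi>. graph_aut (layers G m) adj \<phi>} = layer_right_mult G m ` carrier G"
proof (intro equalityI subsetI)
  fix \<phi> assume "\<phi> \<in> {\<phi>. graph_aut (layers G m) adj \<phi>}"
  then have \<phi>: "graph_aut (layers G m) adj \<phi>" by simp
  obtain \<sigma> a where \<sigma>: "\<sigma> permutes {..<m}" and a: "\<And>i. i < m \<Longrightarrow> a i \<in> carrier G"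
    and twist: "\<And>g i. g \<in> carrier G \<Longrightarrow> i < m \<Longrightarrow> \<phi> (g, i) = (g \<otimes> a i, \<sigma> i)"
    using aut_is_layer_twist[OF \<phi> gen grr] by blast
  have id: "\<forall>i<m. \<sigma> i = i \<and> a i = a 0"
    by (rule rigid[OF \<sigma> a aut_twist_respects_voltages[OF \<phi> \<sigma> a twist]])
  have "\<phi> = layer_right_mult G m (a 0)"
  proof
    fix u :: "'a \<times> nat"
    obtain g i where u: "u = (g, i)" by (cases u)
    show "\<phi> u = layer_right_mult G m (a 0) u"
    proof (cases "u \<in> layers G m")
      case True
      with u have gi: "g \<in> carrier G" "i < m" by auto
      with id have "\<sigma> i = i" "a i = a 0" by blast+
      with gi twist show ?thesis by (simp add: u layer_right_mult_apply)
    next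
      case False
      then show ?thesis using graph_aut_outside[OF \<phi> False] by (auto simp: u layer_right_mult_def)
    qed
  qed
  with a m show "\<phi> \<in> layer_right_mult G m ` carrier G" by blast
next
  fix \<phi> assume "\<phi> \<in> layer_right_mult G m ` carrier G"
  then show "\<phi> \<in> {\<phi>. graph_aut (layers G m) adj \<phi>}" using layer_right_mult_aut by blast
qed

theorem is_mGRR_if_rigid:
  assumes fin: "finite (carrier G)"
    and gen: "generate G (R - isolated_in_R G R) = carrier G" and grr: "is_GRR G R"
    and m: "0 < m"
    and deg: "\<And>i. i < m \<Longrightarrow> (\<Sum>j\<in>{..<m} - {i}. card (V i j)) = d"
    and rigid: "\<And>\<sigma> a. \<sigma> permutes {..<m} \<Longrightarrow> (\<And>i. i < m \<Longrightarrow> a i \<in> carrier G) \<Longrightarrow>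
      respects_voltages G m V \<sigma> a \<Longrightarrow> \<forall>i<m. \<sigma> i = i \<and> a i = a 0"
  shows "is_mGRR G m adj"
  unfolding is_mGRR_def
  using regular_if_voltage_degree_const[OF fin deg] aut_eq_layer_right_mult[OF gen grr m rigid]
  by blast

end

section \<open>Cycle voltages\<close>

(* The voltages of \<Theta> in cases (1) and (3): the layers form the path 0 - 1 - ... - (m - 1),
   closed to a cycle by an edge of voltage x from layer 0 to layer m - 1 (a second, parallel
   edge when m = 2). *)
definition cycle_voltage :: "('a, 'b) monoid_scheme \<Rightarrow> 'a \<Rightarrow> nat \<Rightarrow> nat \<Rightarrow> nat \<Rightarrow> 'a set" where
  "cycle_voltage G x m i j = {c. (c = \<one>\<^bsub>G\<^esub> \<and> (j = Suc i \<or> i = Suc j))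
     \<or> (c = x \<and> i = 0 \<and> j = m - 1) \<or> (c = inv\<^bsub>G\<^esub> x \<and> i = m - 1 \<and> j = 0)}"

context group
begin

lemma theta1_eq_layered_cycle:
  assumes m: "2 \<le> m" and x: "x \<in> carrier G"
  shows "theta1 G R x m = layered_cayley_adj G m R (cycle_voltage G x m)"
proof (intro ext)
  fix u v :: "'a \<times> nat"
  obtain g i h j where uv: "u = (g, i)" "v = (h, j)" by (metis surj_pair)
  have "g = x \<otimes> h \<longleftrightarrow> h = inv x \<otimes> g" if "g \<in> carrier G" "h \<in> carrier G"
    using that x inv_solve_left[of h x g] by auto
  then show "theta1 G R x m u v = layered_cayley_adj G m R (cycle_voltage G x m) u v"
    using m x unfolding uv theta1_def theta1_gen_def layered_cayley_adj_def cycle_voltage_def cay_adj_def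
    by (cases "i = j") auto
qed

lemma cycle_voltage_closed: "x \<in> carrier G \<Longrightarrow> cycle_voltage G x m i j \<subseteq> carrier G"
  by (auto simp: cycle_voltage_def)

lemma cycle_voltage_2:
  "i < 2 \<Longrightarrow> j < 2 \<Longrightarrow> i \<noteq> j \<Longrightarrow>
    cycle_voltage G x 2 i j = (if i = 0 then {\<one>, x} else {\<one>, inv x})"
  by (auto simp: cycle_voltage_def)

lemma cycle_voltage_3:
  "cycle_voltage G x 3 0 (Suc 0) = {\<one>}" "cycle_voltage G x 3 (Suc 0) 0 = {\<one>}"
  "cycle_voltage G x 3 (Suc 0) 2 = {\<one>}" "cycle_voltage G x 3 2 (Suc 0) = {\<one>}"
  "cycle_voltage G x 3 0 2 = {x}" "cycle_voltage G x 3 2 0 = {inv x}"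
  by (auto simp: cycle_voltage_def)

lemma cycle_voltage_ge3:
  assumes "3 \<le> m"
  shows "cycle_voltage G x m i j = (if j = Suc i \<or> i = Suc j then {\<one>}
    else if i = 0 \<and> j = m - 1 then {x} else if i = m - 1 \<and> j = 0 then {inv x} else {})"
  using assms by (auto simp: cycle_voltage_def)

lemma cycle_voltage_unique:
  "3 \<le> m \<Longrightarrow> c \<in> cycle_voltage G x m p q \<Longrightarrow> d \<in> cycle_voltage G x m p q \<Longrightarrow> c = d"
  by (auto simp: cycle_voltage_ge3 split: if_splits)

lemma cycle_voltage_adjacent:
  "c \<in> cycle_voltage G x m i j \<Longrightarrow> j = Suc i \<or> i = Suc j \<or> (i = 0 \<and> j = m - 1) \<or> (i = m - 1 \<and> j = 0)"
  by (auto simp: cycle_voltage_def)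

lemma one_in_cycle_voltage_iff:
  "x \<noteq> \<one> \<Longrightarrow> x \<in> carrier G \<Longrightarrow> \<one> \<in> cycle_voltage G x m p q \<longleftrightarrow> q = Suc p \<or> p = Suc q"
  by (auto simp: cycle_voltage_def inv_eq_1_iff eq_commute[of "\<one>"])

lemma x_in_cycle_voltage_iff:
  assumes "x \<noteq> \<one>" "x \<otimes> x \<noteq> \<one>" "x \<in> carrier G"
  shows "x \<in> cycle_voltage G x m p q \<longleftrightarrow> p = 0 \<and> q = m - 1"
proof -
  have "x \<noteq> inv x" using assms(2,3) r_inv[of x] by metis
  with assms(1) show ?thesis by (auto simp: cycle_voltage_def)
qed

(* Three pairwise adjacent layers exist only for m = 3, and there exactly one of the three
   voltages is x or x\<inverse> while the other two are 1. *)
lemma cycle_voltage_triangle_ge3: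
  assumes m: "3 \<le> m" and x: "x \<in> carrier G" "x \<noteq> \<one>"
    and ijl: "i < m" "j < m" "l < m" "distinct [i, j, l]"
    and cde: "c \<in> cycle_voltage G x m i j" "d \<in> cycle_voltage G x m i l" "e \<in> cycle_voltage G x m j l"
  shows "d \<noteq> e \<otimes> c"
proof -
  have ix: "inv x \<in> carrier G" "inv x \<noteq> \<one>" using x by (auto simp: inv_eq_1_iff)
  have "m = 3"
    using cycle_voltage_adjacent[OF cde(1)] cycle_voltage_adjacent[OF cde(2)]
      cycle_voltage_adjacent[OF cde(3)] ijl m by auto
  with ijl have "i \<in> {0, Suc 0, 2}" "j \<in> {0, Suc 0, 2}" "l \<in> {0, Suc 0, 2}" by auto
  with ijl(4) cde x ix show ?thesis
    unfolding \<open>m = 3\<close> by (auto simp: cycle_voltage_3 eq_commute[of "\<one>" "inv x"])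
qed

lemma layered_cayley_graph_cycle_voltage:
  assumes cayley: "cayley_subset G R" and m: "2 \<le> m" and x: "x \<in> carrier G" "x \<noteq> \<one>"
    and xR: "m = 2 \<Longrightarrow> x \<notin> R"
  shows "layered_cayley_graph G R m (cycle_voltage G x m)"
proof -
  have R1: "\<one> \<notin> R" using cayley by (simp add: cayley_subset_def)
  have ix: "inv x \<in> carrier G" "inv x \<noteq> \<one>" using x by (auto simp: inv_eq_1_iff)
  consider "m = 2" | "3 \<le> m" using m by linarith
  then show ?thesis
  proof cases
    case 1
    have ixR: "inv x \<notin> R" using xR 1 cayley x by (force simp: cayley_subset_def)
    show ?thesis
      by unfold_locales (use cayley x ix R1 xR ixR 1 cycle_voltage_closed in
        \<open>auto simp: cycle_voltage_2 distinct_length_2_or_more split: if_splits\<close>)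
  next
    case 2
    note V = cycle_voltage_ge3[OF 2]
    show ?thesis
    proof unfold_locales
      fix i j c d
      assume "i < m" "j < m" "i \<noteq> j" "c \<in> cycle_voltage G x m i j" "d \<in> cycle_voltage G x m j i"
      then have "d \<otimes> c = \<one>" using x 2 by (auto simp: V split: if_splits)
      with R1 show "d \<otimes> c \<notin> R" by simp
    next
      fix i j c d
      assume c: "c \<in> cycle_voltage G x m i j" and "d \<in> cycle_voltage G x m i j"
      then have "d = c" using cycle_voltage_unique[OF 2] by blast
      moreover have "c \<in> carrier G" using c cycle_voltage_closed[OF x(1)] by blast
      ultimately show "d \<otimes> inv c \<notin> R" using R1 by simp
    next
      fix i j l c d e
      assume "i < m" "j < m" "l < m" "distinct [i, j, l]"
        "c \<in> cycle_voltage G x m i j" "d \<in> cycle_voltage G x m i l" "e \<in> cycle_voltage G x m j l"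
      then show "d \<noteq> e \<otimes> c" by (rule cycle_voltage_triangle_ge3[OF 2 x])
    qed (use cayley cycle_voltage_closed[OF x(1)] in auto)
  qed
qed

lemma cycle_voltage_degree:
  assumes m: "2 \<le> m" and x: "x \<in> carrier G" "x \<noteq> \<one>" and i: "i < m"
  shows "(\<Sum>j\<in>{..<m} - {i}. card (cycle_voltage G x m i j)) = 2"
proof -
  consider "m = 2" | "3 \<le> m" using m by linarith
  then show ?thesis
  proof cases
    case 1
    have "inv x \<noteq> \<one>" using x by (simp add: inv_eq_1_iff)
    then have "\<one> \<noteq> x" "\<one> \<noteq> inv x" using x by metis+
    from i 1 consider "i = 0" | "i = 1" by linarith
    then show ?thesis
    proof cases
      case 1
      then have "{..<m} - {i} = {1}" using \<open>m = 2\<close> by auto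
      with 1 \<open>m = 2\<close> \<open>\<one> \<noteq> x\<close> show ?thesis by (simp add: cycle_voltage_2)
    next
      case 2
      then have "{..<m} - {i} = {0}" using \<open>m = 2\<close> by auto
      with 2 \<open>m = 2\<close> \<open>\<one> \<noteq> inv x\<close> show ?thesis by (simp add: cycle_voltage_2)
    qed
  next
    case 2
    let ?N = "{j \<in> {..<m} - {i}. cycle_voltage G x m i j \<noteq> {}}"
    have "(\<Sum>j\<in>{..<m} - {i}. card (cycle_voltage G x m i j))
        = (\<Sum>j\<in>{..<m} - {i}. if cycle_voltage G x m i j \<noteq> {} then 1 else 0)"
      by (rule sum.cong) (simp_all add: cycle_voltage_ge3[OF 2])
    also have "\<dots> = card ?N" by (simp add: sum.inter_filter[symmetric])
    also have "?N = (if i = 0 then {1, m - 1} else if i = m - 1 then {0, m - 2} else {i - 1, i + 1})"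
      using 2 i by (auto simp: cycle_voltage_ge3[OF 2])
    also have "card \<dots> = 2" using 2 i by auto
    finally show ?thesis .
  qed
qed

(* Along the path edge from layer i to layer i + 1 (voltage 1) the twist can only use a
   central voltage, and 1 is the only central voltage. *)
lemma cycle_voltage_twist_step:
  assumes m: "3 \<le> m" and x: "x \<in> carrier G" "x \<notin> group_center G"
    and a: "\<And>i. i < m \<Longrightarrow> a i \<in> carrier G"
    and resp: "respects_voltages G m (cycle_voltage G x m) \<sigma> a" and i: "Suc i < m"
  shows "a (Suc i) = a i \<and> (\<sigma> (Suc i) = Suc (\<sigma> i) \<or> \<sigma> i = Suc (\<sigma> (Suc i)))"
proof -
  let ?V = "cycle_voltage G x m (\<sigma> i) (\<sigma> (Suc i))"
  have x1: "x \<noteq> \<one>" using x one_in_group_center by blast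
  have ai: "a i \<in> carrier G" "a (Suc i) \<in> carrier G" using a i by auto
  have one: "\<one> \<in> cycle_voltage G x m i (Suc i)" by (simp add: cycle_voltage_def)
  have "\<exists>d\<in>?V. g \<otimes> a (Suc i) = d \<otimes> (g \<otimes> a i)" if "g \<in> carrier G" for g
    using respects_voltagesD[OF resp _ i _ one that] i that by simp
  then obtain d where d: "d \<in> ?V" "\<one> \<otimes> a (Suc i) = d \<otimes> (\<one> \<otimes> a i)" by blast
  have eq: "g \<otimes> a (Suc i) = d \<otimes> (g \<otimes> a i)" if "g \<in> carrier G" for g
    using \<open>\<And>g. g \<in> carrier G \<Longrightarrow> _\<close>[OF that] cycle_voltage_unique[OF m _ d(1)] by metis
  have dc: "d \<in> carrier G" using d cycle_voltage_closed[OF x(1)] by blast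
  have "d \<in> group_center G" "a (Suc i) = d \<otimes> a i" using left_factor_central[OF ai(1,2) dc eq] by auto
  moreover have "inv x \<notin> group_center G" using x inv_in_group_center_iff by blast
  ultimately have "d = \<one>" using d(1) x by (auto simp: cycle_voltage_def)
  with d(1) \<open>a (Suc i) = d \<otimes> a i\<close> ai show ?thesis
    by (simp add: one_in_cycle_voltage_iff[OF x1 x(1)])
qed

lemma cycle_voltage_rigid_ge3:
  assumes m: "3 \<le> m" and x: "x \<in> carrier G" "x \<notin> group_center G" and xx: "x \<otimes> x \<noteq> \<one>"
    and \<sigma>: "\<sigma> permutes {..<m}" and a: "\<And>i. i < m \<Longrightarrow> a i \<in> carrier G"
    and resp: "respects_voltages G m (cycle_voltage G x m) \<sigma> a"
  shows "\<forall>i<m. \<sigma> i = i \<and> a i = a 0"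
proof -
  note step = cycle_voltage_twist_step[OF m x a resp]
  have x1: "x \<noteq> \<one>" using x one_in_group_center by blast
  have a_const: "a i = a 0" if "i < m" for i
    using that
  proof (induction i)
    case (Suc i)
    then show ?case using step[of i] by simp
  qed simp
  have "\<sigma> 0 = 0"
  proof -
    have "x \<in> cycle_voltage G x m 0 (m - 1)" by (simp add: cycle_voltage_def)
    from respects_voltagesD[OF resp _ _ _ this one_closed] m obtain d
      where d: "d \<in> cycle_voltage G x m (\<sigma> 0) (\<sigma> (m - 1))" "x \<otimes> \<one> \<otimes> a (m - 1) = d \<otimes> (\<one> \<otimes> a 0)"
      by auto
    moreover have "d \<in> carrier G" using d(1) cycle_voltage_closed[OF x(1)] by blast
    ultimately have "x \<in> cycle_voltage G x m (\<sigma> 0) (\<sigma> (m - 1))"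
      using a_const[of "m - 1"] a[of 0] x m by simp
    then show ?thesis by (simp add: x_in_cycle_voltage_iff[OF x1 xx x(1)])
  qed
  with \<sigma> step have "\<sigma> = id" by (intro permutes_path_eq_id) auto
  then have "\<sigma> i = i" for i by simp
  with a_const show ?thesis by blast
qed

lemma cycle_voltage_rigid_2:
  assumes x: "x \<in> carrier G" "x \<notin> group_center G" and xx: "x \<otimes> x \<noteq> \<one>"
    and \<sigma>: "\<sigma> permutes {..<2}" and a: "\<And>i. i < 2 \<Longrightarrow> a i \<in> carrier G"
    and resp: "respects_voltages G 2 (cycle_voltage G x 2) \<sigma> a"
  shows "\<forall>i<2. \<sigma> i = i \<and> a i = a 0"
proof -
  have x1: "x \<noteq> \<one>" using x one_in_group_center by blast
  have ix: "inv x \<in> carrier G" "inv x \<notin> group_center G"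
    using x inv_in_group_center_iff by auto
  have "x \<noteq> inv x" using x xx r_inv[of x] by metis
  have a01: "a 0 \<in> carrier G" "a 1 \<in> carrier G" using a by auto
  have V01: "\<one> \<in> cycle_voltage G x 2 0 1" "x \<in> cycle_voltage G x 2 0 1"
    by (simp_all add: cycle_voltage_2)
  have one_edge: "\<exists>d\<in>cycle_voltage G x 2 (\<sigma> 0) (\<sigma> 1). g \<otimes> a 1 = d \<otimes> (g \<otimes> a 0)"
    if "g \<in> carrier G" for g
    using respects_voltagesD[OF resp _ _ _ V01(1) that] that by simp
  have x_edge: "\<exists>d\<in>cycle_voltage G x 2 (\<sigma> 0) (\<sigma> 1). x \<otimes> a 1 = d \<otimes> a 0"
    using respects_voltagesD[OF resp _ _ _ V01(2) one_closed] x a01 by simp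
  from permutes_lessThan_2[OF \<sigma>] show ?thesis
  proof
    assume id: "\<sigma> 0 = 0 \<and> \<sigma> 1 = 1"
    have "a 1 = a 0 \<or> a 1 = x \<otimes> a 0" using one_edge[OF one_closed] id a01 by (simp add: cycle_voltage_2)
    moreover have "x \<otimes> a 1 = a 0 \<or> x \<otimes> a 1 = x \<otimes> a 0" using x_edge id a01 by (simp add: cycle_voltage_2)
    ultimately have "a 1 = a 0" using x1 xx x a01 by (auto simp: m_assoc[symmetric])
    with id show ?thesis by (simp add: less_2_cases_iff)
  next
    assume swap: "\<sigma> 0 = 1 \<and> \<sigma> 1 = 0"
    have "a 1 = a 0 \<or> a 1 = inv x \<otimes> a 0" using one_edge[OF one_closed] swap a01 by (simp add: cycle_voltage_2)
    moreover have "x \<otimes> a 1 = a 0 \<or> x \<otimes> a 1 = inv x \<otimes> a 0" using x_edge swap a01 by (simp add: cycle_voltage_2)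
    ultimately have "a 1 = inv x \<otimes> a 0" "a 1 \<noteq> a 0" using x1 ix \<open>x \<noteq> inv x\<close> x a01 by auto
    have "g \<otimes> a 1 = inv x \<otimes> (g \<otimes> a 0)" if "g \<in> carrier G" for g
      using one_edge[OF that] swap \<open>a 1 \<noteq> a 0\<close> that a01 by (auto simp: cycle_voltage_2)
    then have "inv x \<in> group_center G" using left_factor_central[OF a01 ix(1)] by blast
    with ix show ?thesis by blast
  qed
qed

end

section \<open>Pair voltages\<close>

definition pair_voltage :: "('a, 'b) monoid_scheme \<Rightarrow> 'a \<Rightarrow> nat \<Rightarrow> nat \<Rightarrow> 'a set" where
  "pair_voltage G x i j = (if i = 0 \<and> j = 1 then {x} else if i = 1 \<and> j = 0 then {inv\<^bsub>G\<^esub> x} else {})"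

context group
begin

lemma theta2_eq_layered_pair:
  assumes x: "x \<in> carrier G"
  shows "theta2 G R x = layered_cayley_adj G 2 R (pair_voltage G x)"
proof (intro ext)
  fix u v :: "'a \<times> nat"
  obtain g i h j where uv: "u = (g, i)" "v = (h, j)" by (metis surj_pair)
  have "g = x \<otimes> h \<longleftrightarrow> h = inv x \<otimes> g" if "g \<in> carrier G" "h \<in> carrier G"
    using that x inv_solve_left[of h x g] by auto
  then show "theta2 G R x u v = layered_cayley_adj G 2 R (pair_voltage G x) u v"
    using x unfolding uv theta2_def theta2_gen_def layered_cayley_adj_def pair_voltage_def cay_adj_def
    by (cases "i = j") auto
qed

lemma layered_cayley_graph_pair_voltage:
  assumes cayley: "cayley_subset G R" and x: "x \<in> carrier G"
  shows "layered_cayley_graph G R 2 (pair_voltage G x)"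
proof -
  have "\<one> \<notin> R" using cayley by (simp add: cayley_subset_def)
  then show ?thesis
    by unfold_locales (use cayley x in \<open>auto simp: pair_voltage_def split: if_splits\<close>)
qed

lemma pair_voltage_degree:
  assumes "i < 2"
  shows "(\<Sum>j\<in>{..<2} - {i}. card (pair_voltage G x i j)) = 1"
proof -
  from assms consider "i = 0" | "i = 1" by linarith
  then show ?thesis
  proof cases
    case 1
    then have "{..<2::nat} - {i} = {1}" by auto
    with 1 show ?thesis by (simp add: pair_voltage_def)
  next
    case 2
    then have "{..<2::nat} - {i} = {0}" by auto
    with 2 show ?thesis by (simp add: pair_voltage_def)
  qed
qed

lemma pair_voltage_rigid:
  assumes x: "x \<in> carrier G" "x \<otimes> x \<notin> group_center G"
    and \<sigma>: "\<sigma> permutes {..<2}" and a: "\<And>i. i < 2 \<Longrightarrow> a i \<in> carrier G"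
    and resp: "respects_voltages G 2 (pair_voltage G x) \<sigma> a"
  shows "\<forall>i<2. \<sigma> i = i \<and> a i = a 0"
proof -
  have a01: "a 0 \<in> carrier G" "a 1 \<in> carrier G" using a by auto
  have "x \<in> pair_voltage G x 0 1" by (simp add: pair_voltage_def)
  from respects_voltagesD[OF resp _ _ _ this]
  have x_edge: "\<exists>d\<in>pair_voltage G x (\<sigma> 0) (\<sigma> 1). x \<otimes> g \<otimes> a 1 = d \<otimes> (g \<otimes> a 0)"
    if "g \<in> carrier G" for g
    using that by simp
  from permutes_lessThan_2[OF \<sigma>] show ?thesis
  proof
    assume id: "\<sigma> 0 = 0 \<and> \<sigma> 1 = 1"
    then have "x \<otimes> a 1 = x \<otimes> a 0" using x_edge[OF one_closed] x a01 by (simp add: pair_voltage_def)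
    with id x a01 show ?thesis by (simp add: less_2_cases_iff)
  next
    assume swap: "\<sigma> 0 = 1 \<and> \<sigma> 1 = 0"
    have eq: "g \<otimes> a 1 = (inv x \<otimes> inv x) \<otimes> (g \<otimes> a 0)" if g: "g \<in> carrier G" for g
    proof -
      have "x \<otimes> (g \<otimes> a 1) = inv x \<otimes> (g \<otimes> a 0)"
        using x_edge[OF g] swap x g a01 by (simp add: pair_voltage_def m_assoc)
      then have "g \<otimes> a 1 = inv x \<otimes> (inv x \<otimes> (g \<otimes> a 0))"
        using inv_solve_left[of "g \<otimes> a 1" x "inv x \<otimes> (g \<otimes> a 0)"] x g a01 by auto
      then show ?thesis using x g a01 by (simp add: m_assoc)
    qed
    have "inv x \<otimes> inv x \<in> carrier G" using x by simp
    from left_factor_central(1)[OF a01 this eq] have "inv x \<otimes> inv x \<in> group_center G" .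
    then have "x \<otimes> x \<in> group_center G" using inv_in_group_center_iff[of "x \<otimes> x"] x
      by (simp add: inv_mult_group)
    with x show ?thesis by blast
  qed
qed

end

section \<open>The graphs \<Theta>\<close>

context group
begin

lemma theta1_is_mGRR:
  assumes fin: "finite (carrier G)" and cayley: "cayley_subset G R" and grr: "is_GRR G R"
    and gen: "generate G (R - isolated_in_R G R) = carrier G"
    and m: "2 \<le> m" and x: "x \<in> carrier G" "x \<notin> group_center G" and xx: "x \<otimes> x \<noteq> \<one>"
    and xR: "m = 2 \<Longrightarrow> x \<notin> R"
  shows "is_mGRR G m (theta1 G R x m)"
proof -
  have x1: "x \<noteq> \<one>" using x one_in_group_center by blast
  interpret layered_cayley_graph G R m "cycle_voltage G x m"
    using layered_cayley_graph_cycle_voltage[OF cayley m x(1) x1 xR] .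
  have rigid: "\<forall>i<m. \<sigma> i = i \<and> a i = a 0"
    if "\<sigma> permutes {..<m}" "\<And>i. i < m \<Longrightarrow> a i \<in> carrier G"
      "respects_voltages G m (cycle_voltage G x m) \<sigma> a" for \<sigma> a
  proof (cases "m = 2")
    case True
    show ?thesis unfolding True by (rule cycle_voltage_rigid_2[OF x xx that[unfolded True]])
  next
    case False
    with m have "3 \<le> m" by linarith
    then show ?thesis by (rule cycle_voltage_rigid_ge3[OF _ x xx that])
  qed
  from m have "0 < m" by simp
  then have "is_mGRR G m (layered_cayley_adj G m R (cycle_voltage G x m))"
    by (rule is_mGRR_if_rigid[OF fin gen grr _ cycle_voltage_degree[OF m x(1) x1] rigid])
  then show ?thesis by (simp add: theta1_eq_layered_cycle[OF m x(1)])
qed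

lemma theta2_is_mGRR:
  assumes fin: "finite (carrier G)" and cayley: "cayley_subset G R" and grr: "is_GRR G R"
    and gen: "generate G (R - isolated_in_R G R) = carrier G"
    and x: "x \<in> carrier G" "x \<otimes> x \<notin> group_center G"
  shows "is_mGRR G 2 (theta2 G R x)"
proof -
  interpret layered_cayley_graph G R 2 "pair_voltage G x"
    using layered_cayley_graph_pair_voltage[OF cayley x(1)] .
  have "is_mGRR G 2 (layered_cayley_adj G 2 R (pair_voltage G x))"
    by (rule is_mGRR_if_rigid[OF fin gen grr _ pair_voltage_degree pair_voltage_rigid[OF x]]) simp
  then show ?thesis by (simp add: theta2_eq_layered_pair[OF x(1)])
qed

end

theorem lemma3p7:
  fixes G :: "('a, 'b) monoid_scheme" and R :: "'a set" and x :: 'a and m :: nat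
  assumes grp: "group G"
    and fin: "finite (carrier G)"
    and nonab: "\<exists>a\<in>carrier G. \<exists>b\<in>carrier G. a \<otimes>\<^bsub>G\<^esub> b \<noteq> b \<otimes>\<^bsub>G\<^esub> a"
    and m2: "m \<ge> 2"
    and cs: "cayley_subset G R"
    and grr: "is_GRR G R"
    and iso: "card (isolated_in_R G R) \<le> 1"
    and gen: "generate G (R - isolated_in_R G R) = carrier G"
    and xG: "x \<in> carrier G"
    and cases: "(m \<ge> 3 \<and> x \<notin> group_center G \<and> group.ord G x > 2)
      \<or> (m = 2 \<and> x \<otimes>\<^bsub>G\<^esub> x \<notin> group_center G)
      \<or> (m = 2 \<and> (\<forall>g\<in>carrier G. g \<otimes>\<^bsub>G\<^esub> g \<in> group_center G)
           \<and> x \<notin> group_center G \<union> R \<and> group.ord G x > 2)"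
  shows "((m \<ge> 3 \<and> x \<notin> group_center G \<and> group.ord G x > 2)
            \<longrightarrow> is_mGRR G m (theta1 G R x m))
       \<and> ((m = 2 \<and> x \<otimes>\<^bsub>G\<^esub> x \<notin> group_center G)
            \<longrightarrow> is_mGRR G 2 (theta2 G R x))
       \<and> ((m = 2 \<and> (\<forall>g\<in>carrier G. g \<otimes>\<^bsub>G\<^esub> g \<in> group_center G)
             \<and> x \<notin> group_center G \<union> R \<and> group.ord G x > 2)
            \<longrightarrow> is_mGRR G m (theta1 G R x m))"
proof -
  interpret group G by (rule grp)
  note theta1 = theta1_is_mGRR[OF fin cs grr gen m2 xG _ sq_ne_one_if_ord_gt_2[OF xG]]
  show ?thesis
  proof (intro conjI impI)
    assume "3 \<le> m \<and> x \<notin> group_center G \<and> 2 < group.ord G x"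
    then show "is_mGRR G m (theta1 G R x m)" by (intro theta1) auto
  next
    assume "m = 2 \<and> x \<otimes>\<^bsub>G\<^esub> x \<notin> group_center G"
    then show "is_mGRR G 2 (theta2 G R x)" using theta2_is_mGRR[OF fin cs grr gen xG] by blast
  next
    assume "m = 2 \<and> (\<forall>g\<in>carrier G. g \<otimes>\<^bsub>G\<^esub> g \<in> group_center G)
      \<and> x \<notin> group_center G \<union> R \<and> 2 < group.ord G x"
    then show "is_mGRR G m (theta1 G R x m)" by (intro theta1) auto
  qed
qed

end
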